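(* Let $0<\sigma_1<\sigma_2$ and $\epsilon\in(0,1)$. If a mass vector $W$ satisfies $(1-\epsilon)H(\theta,\lambda)\le\tilde H(\theta,\lambda)\le(1+\epsilon)H(\theta,\lambda)$ for all $\theta\in\Theta$ and $\lambda\in[\kappa(\theta),\tau(\theta,\sigma_1)]$, then the same holds for all $\theta\in\Theta$ and $\lambda\in[\kappa(\theta),\tau(\theta,\sigma_2)]$.
   Context: Setting: $\Xi$ a metric space with metric $\mathtt d$, $p\ge1$, data $\xi_1,\dots,\xi_n\in\Xi$, loss $\ell:\mathbb R^d\times\Xi\to[0,\infty)$, feasible set $\Theta\subseteq\mathbb R^d$; there exist a positive continuous $\mathtt C(\theta)$ and $\xi_0\in\Xi$ with $\ell(\theta,\xi)\le\mathtt C(\theta)(1+\mathtt d^p(\xi,\xi_0))$. Define $h_k(\theta,\lambda)=\sup_{\zeta\in\Xi}\{\ell(\theta,\zeta)-\lambda\mathtt d^p(\zeta,\xi_k)\}$, $H=\frac1n\sum_kh_k$, and for a mass vector $W$ ($w_k\ge0,\sum w_k=1$) $\tilde H=\sum_kw_kh_k$; $\kappa(\theta)=\limsup_{\mathtt d(\xi,\xi_0)\to\infty}\frac{\ell(\theta,\xi)-\ell(\theta,\xi_0)}{\mathtt d^p(\xi,\xi_0)}$; $\rho=\max_k\mathtt d(\xi_k,\xi_0)$ and $\tau(\theta,\sigma)=\mathtt C(\theta)(2^{p-1}+\frac{1+2^{p-1}\rho^p}{\sigma^p})$ for $\sigma>0$. *)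

theory Defs
  imports "HOL-Analysis.Analysis" "HOL-Library.Extended_Real"
begin

text \<open>Metric space: a type of class metric_space with d = dist. Data xi 0, ..., xi (n-1).
  Suprema may be infinite, so h_k, H, H~, kappa take values in ereal.\<close>

definition hk :: "('v \<Rightarrow> 'a::metric_space \<Rightarrow> real) \<Rightarrow> real \<Rightarrow> 'a \<Rightarrow> 'v \<Rightarrow> real \<Rightarrow> ereal" where
  "hk loss p xik \<theta> lam = (SUP \<zeta>. ereal (loss \<theta> \<zeta> - lam * dist \<zeta> xik powr p))"

definition Hfun :: "('v \<Rightarrow> 'a::metric_space \<Rightarrow> real) \<Rightarrow> real \<Rightarrow> nat \<Rightarrow> (nat \<Rightarrow> 'a) \<Rightarrow> 'v \<Rightarrow> real \<Rightarrow> ereal" where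
  "Hfun loss p n xi \<theta> lam = ereal (1 / real n) * (\<Sum>k<n. hk loss p (xi k) \<theta> lam)"

definition Htilde :: "('v \<Rightarrow> 'a::metric_space \<Rightarrow> real) \<Rightarrow> real \<Rightarrow> nat \<Rightarrow> (nat \<Rightarrow> 'a) \<Rightarrow> (nat \<Rightarrow> real) \<Rightarrow> 'v \<Rightarrow> real \<Rightarrow> ereal" where
  "Htilde loss p n xi w \<theta> lam = (\<Sum>k<n. ereal (w k) * hk loss p (xi k) \<theta> lam)"

definition kappa :: "('v \<Rightarrow> 'a::metric_space \<Rightarrow> real) \<Rightarrow> real \<Rightarrow> 'a \<Rightarrow> 'v \<Rightarrow> ereal" where
  "kappa loss p xi0 \<theta> = Limsup (filtercomap (\<lambda>\<xi>.  dist \<xi> xi0) at_top)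
      (\<lambda>\<xi>.  ereal ((loss \<theta> \<xi> - loss \<theta> xi0) / dist \<xi> xi0 powr p))"

definition rho :: "nat \<Rightarrow> (nat \<Rightarrow> 'a::metric_space) \<Rightarrow> 'a \<Rightarrow> real" where
  "rho n xi xi0 = Max ((\<lambda>k. dist (xi k) xi0) ` {..<n})"

definition tau :: "('v \<Rightarrow> real) \<Rightarrow> real \<Rightarrow> nat \<Rightarrow> (nat \<Rightarrow> 'a::metric_space) \<Rightarrow> 'a \<Rightarrow> 'v \<Rightarrow> real \<Rightarrow> real" where
  "tau C p n xi xi0 \<theta> \<sigma> = C \<theta> * (2 powr (p - 1) + (1 + 2 powr (p - 1) * rho n xi xi0 powr p) / \<sigma> powr p)"

end

theory Submission
  imports Defs
begin

text \<open>The radius \<tau>(\<theta>, \<sigma>) decreases in \<sigma>, so the interval of multipliers for \<sigma>2 lies inside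
  the one for \<sigma>1, where the two-sided bound is assumed.\<close>

lemma tau_antimono:
  assumes "0 \<le> p" and "0 \<le> C \<theta>" and "0 < \<sigma>1" and "\<sigma>1 \<le> \<sigma>2"
  shows "tau C p n xi xi0 \<theta> \<sigma>2 \<le> tau C p n xi xi0 \<theta> \<sigma>1"
proof -
  define N where "N = 1 + 2 powr (p - 1) * rho n xi xi0 powr p"
  have "0 < N" unfolding N_def by (simp add: add_pos_nonneg)
  moreover have "\<sigma>1 powr p \<le> \<sigma>2 powr p" using assms by (intro powr_mono2) auto
  moreover have "0 < \<sigma>1 powr p" using assms by simp
  ultimately have "N / \<sigma>2 powr p \<le> N / \<sigma>1 powr p"
    by (intro divide_left_mono) (auto intro!: mult_pos_pos)
  then show ?thesis
    unfolding tau_def N_def[symmetric] using assms by (intro mult_left_mono) auto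
qed

theorem corollary2:
  fixes loss :: "real^'d \<Rightarrow> 'a::metric_space \<Rightarrow> real"
    and \<Theta> :: "(real^'d) set" and C :: "real^'d \<Rightarrow> real"
    and xi :: "nat \<Rightarrow> 'a" and xi0 :: 'a and n :: nat and p :: real
    and w :: "nat \<Rightarrow> real" and \<sigma>1 \<sigma>2 \<epsilon> :: real
  assumes "p \<ge> 1" and "n \<ge> 1"
    and "\<And>\<theta> \<xi>. loss \<theta> \<xi> \<ge> 0"
    and "continuous_on UNIV C" and "\<And>\<theta>. C \<theta> > 0"
    and "\<And>\<theta> \<xi>. loss \<theta> \<xi> \<le> C \<theta> * (1 + dist \<xi> xi0 powr p)"
    and "\<And>k. k < n \<Longrightarrow> w k \<ge> 0" and "(\<Sum>k<n. w k) = 1"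
    and "0 < \<sigma>1" and "\<sigma>1 < \<sigma>2" and "0 < \<epsilon>" and "\<epsilon> < 1"
    and "\<And>\<theta> lam. \<theta> \<in> \<Theta> \<Longrightarrow> kappa loss p xi0 \<theta> \<le> ereal lam \<Longrightarrow>
           lam \<le> tau C p n xi xi0 \<theta> \<sigma>1 \<Longrightarrow>
           ereal (1 - \<epsilon>) * Hfun loss p n xi \<theta> lam \<le> Htilde loss p n xi w \<theta> lam \<and>
           Htilde loss p n xi w \<theta> lam \<le> ereal (1 + \<epsilon>) * Hfun loss p n xi \<theta> lam"
  shows "\<And>\<theta> lam. \<theta> \<in> \<Theta> \<Longrightarrow> kappa loss p xi0 \<theta> \<le> ereal lam \<Longrightarrow>
           lam \<le> tau C p n xi xi0 \<theta> \<sigma>2 \<Longrightarrow>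
           ereal (1 - \<epsilon>) * Hfun loss p n xi \<theta> lam \<le> Htilde loss p n xi w \<theta> lam \<and>
           Htilde loss p n xi w \<theta> lam \<le> ereal (1 + \<epsilon>) * Hfun loss p n xi \<theta> lam"
proof -
  fix \<theta> lam
  assume \<theta>: "\<theta> \<in> \<Theta>" and kappa_le: "kappa loss p xi0 \<theta> \<le> ereal lam"
  assume "lam \<le> tau C p n xi xi0 \<theta> \<sigma>2"
  also have "tau C p n xi xi0 \<theta> \<sigma>2 \<le> tau C p n xi xi0 \<theta> \<sigma>1"
    using assms(1,5,9,10) by (intro tau_antimono) (auto intro: less_imp_le)
  finally show "ereal (1 - \<epsilon>) * Hfun loss p n xi \<theta> lam \<le> Htilde loss p n xi w \<theta> lam \<and>
      Htilde loss p n xi w \<theta> lam \<le> ereal (1 + \<epsilon>) * Hfun loss p n xi \<theta> lam"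
    using assms(13)[OF \<theta> kappa_le] by blast
qed

end
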